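(* Let $d\ge1$, $\kappa\ge1$, $\theta>0$ and $\eta\in\mathbb R$, and for $i\ge2$ let $N_i=\lfloor i^\kappa(\log i)^\eta\rfloor$. Then $$\sum_{i=2}^\infty\ \sum_{\{\mathbf n\in\mathbb Z_+^d:\ |\mathbf n|=N_i\}}\frac1{|\mathbf n|^\theta}=\sum_{i=2}^\infty\frac{d(N_i)}{N_i^{\theta}}\ \begin{cases}<\infty,&\theta>1/\kappa,\\=\infty,&\theta<1/\kappa.\end{cases}$$
   Context: $\mathbb Z_+^d$ is the set of $d$-tuples of positive integers; $|\mathbf n|=\prod_{k=1}^d n_k$. For a positive integer $j$, $d(j)=\operatorname{Card}\{\mathbf k\in\mathbb Z_+^d:|\mathbf k|=j\}$ (terms with $N_i=0$, which occur for at most finitely many $i$, are omitted). *)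

theory Defs
  imports "HOL-Analysis.Analysis"
begin

definition tuples_prod :: "nat \<Rightarrow> nat \<Rightarrow> nat list set" where
  "tuples_prod d j = {ks. length ks = d \<and> (\<forall>k\<in>set ks. k > 0) \<and> prod_list ks = j}"

definition dfun :: "nat \<Rightarrow> nat \<Rightarrow> nat" where
  "dfun d j = card (tuples_prod d j)"

definition Nseq :: "real \<Rightarrow> real \<Rightarrow> nat \<Rightarrow> nat" where
  "Nseq \<kappa> \<eta> i = nat \<lfloor>real i powr \<kappa> * ln (real i) powr \<eta>\<rfloor>"

end

theory Submission
  imports Defs "HOL-Real_Asymp.Real_Asymp" "HOL-Computational_Algebra.Primes"
begin

(* For convergence we use that d(j) grows slower than any power of j: fixing the first
   d-1 coordinates (all divisors of j) determines the last one, so d(j) \<le> \<tau>(j)^(d-1)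
   for the divisor-counting function \<tau>, and \<tau>(j) \<le> C j^\<epsilon> by the classical
   prime-by-prime estimate.  Hence the series is dominated by \<Sum> N_i^(-s) for some
   s > 1/\<kappa>, and from below it dominates \<Sum> N_i^(-\<theta>) because d(j) \<ge> 1. *)

section \<open>The divisor-counting function\<close>

definition divisor_count :: "nat \<Rightarrow> nat" where
  "divisor_count n = card {k. k dvd n}"

(* Every divisor of x*y is a product of a divisor of x and a divisor of y. *)
lemma divisor_count_mult_le:
  assumes "x > 0" "y > 0"
  shows "divisor_count (x * y) \<le> divisor_count x * divisor_count y"
proof -
  let ?D = "\<lambda>n::nat. {k. k dvd n}"
  have fin: "finite (?D x)" "finite (?D y)"
    using assms by (auto intro: finite_divisors_nat)
  have "?D (x * y) \<subseteq> (\<lambda>(u, v). u * v) ` (?D x \<times> ?D y)"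
  proof
    fix k assume "k \<in> ?D (x * y)"
    then obtain u v where "k = u * v" "u dvd x" "v dvd y" by (auto elim: dvd_productE)
    thus "k \<in> (\<lambda>(u, v). u * v) ` (?D x \<times> ?D y)" by force
  qed
  hence "divisor_count (x * y) \<le> card ((\<lambda>(u, v). u * v) ` (?D x \<times> ?D y))"
    unfolding divisor_count_def using fin by (intro card_mono) auto
  also have "\<dots> \<le> card (?D x \<times> ?D y)"
    using fin by (intro card_image_le) auto
  finally show ?thesis by (simp add: divisor_count_def card_cartesian_product)
qed

(* The divisors of p^a are p^0, ..., p^a. *)
lemma divisor_count_prime_power_le:
  assumes "prime (p::nat)"
  shows "divisor_count (p ^ a) \<le> a + 1"
proof -
  have "{k. k dvd p ^ a} \<subseteq> (\<lambda>j. p ^ j) ` {..a}"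
    using assms by (auto simp: divides_primepow_nat)
  hence "divisor_count (p ^ a) \<le> card ((\<lambda>j. p ^ j) ` {..a})"
    unfolding divisor_count_def by (intro card_mono) auto
  also have "\<dots> \<le> card {..a}" by (rule card_image_le) auto
  finally show ?thesis by simp
qed

(* The local factor a+1 of a prime power p^a is at most p^(a\<epsilon>) once p^\<epsilon> \<ge> 2, and at
   most a fixed constant K times p^(a\<epsilon>) for every prime.  Bundled so that each of the
   finitely many primes below M = \<lceil>2^(1/\<epsilon>)\<rceil> costs one factor K. *)
lemma prime_power_factor_bound:
  fixes \<epsilon> :: real and p :: nat
  defines "K \<equiv> 1 + 1 / (\<epsilon> * ln 2)" and "M \<equiv> nat \<lceil>2 powr (1 / \<epsilon>)\<rceil>"
  assumes "\<epsilon> > 0" "p \<ge> 2"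
  shows "real (a + 1) * K ^ min p M \<le> K ^ min (Suc p) M * real p powr (real a * \<epsilon>)"
proof (cases "p < M")
  case True
  define c where "c = \<epsilon> * ln 2"
  have c: "c > 0" using assms by (simp add: c_def)
  have "1 + real a * c \<le> exp (real a * c)" by (rule exp_ge_add_one_self)
  also have "\<dots> = 2 powr (real a * \<epsilon>)" by (simp add: powr_def c_def)
  also have "\<dots> \<le> real p powr (real a * \<epsilon>)" using assms by (intro powr_mono2) auto
  finally have exp_bound: "1 + real a * c \<le> real p powr (real a * \<epsilon>)" .
  have "real (a + 1) \<le> K * (1 + real a * c)"
    using c by (simp add: K_def c_def[symmetric] field_simps)
  also have "\<dots> \<le> K * real p powr (real a * \<epsilon>)"
    using exp_bound c by (intro mult_left_mono) (auto simp: K_def c_def[symmetric])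
  finally have "real (a + 1) * K ^ p \<le> K * real p powr (real a * \<epsilon>) * K ^ p"
    using c by (intro mult_right_mono) (auto simp: K_def c_def[symmetric])
  thus ?thesis using True by (simp add: min_def mult_ac)
next
  case False
  hence "2 powr (1 / \<epsilon>) \<le> real p" unfolding M_def by linarith
  hence "(2 powr (1 / \<epsilon>)) powr \<epsilon> \<le> real p powr \<epsilon>" using assms by (intro powr_mono2) auto
  hence p_eps: "2 \<le> real p powr \<epsilon>" using assms by (simp add: powr_powr)
  have "real (a + 1) \<le> 2 ^ a" by (induction a) auto
  also have "\<dots> \<le> (real p powr \<epsilon>) ^ a" using p_eps by (intro power_mono) auto
  also have "\<dots> = real p powr (real a * \<epsilon>)" using assms by (subst powr_power) auto
  finally have "real (a + 1) * K ^ M \<le> real p powr (real a * \<epsilon>) * K ^ M"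
    using assms by (intro mult_right_mono) (auto simp: K_def)
  moreover have "min p M = M" "min (Suc p) M = M" using False by auto
  ultimately show ?thesis by (simp add: mult_ac)
qed

(* Induction over the largest admissible prime factor: for n whose prime factors are all
   below B, \<tau>(n) \<le> K^min(B,M) n^\<epsilon>. *)
lemma divisor_count_smooth_bound:
  fixes \<epsilon> :: real
  defines "K \<equiv> 1 + 1 / (\<epsilon> * ln 2)" and "M \<equiv> nat \<lceil>2 powr (1 / \<epsilon>)\<rceil>"
  assumes eps: "\<epsilon> > 0" and "n > 0" and "\<And>p. prime p \<Longrightarrow> p dvd n \<Longrightarrow> p < B"
  shows "real (divisor_count n) \<le> K ^ min B M * real n powr \<epsilon>"
  using assms(4,5)
proof (induction B arbitrary: n)
  case 0
  hence "n = 1" by (metis less_nat_zero_code prime_factor_nat)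
  thus ?case by (simp add: divisor_count_def)
next
  case (Suc B)
  have K1: "K \<ge> 1" using eps by (simp add: K_def)
  show ?case
  proof (cases "prime B")
    case False
    hence "real (divisor_count n) \<le> K ^ min B M * real n powr \<epsilon>"
      using Suc by (intro Suc.IH) (auto simp: less_Suc_eq)
    also have "\<dots> \<le> K ^ min (Suc B) M * real n powr \<epsilon>"
      using K1 by (intro mult_right_mono power_increasing) auto
    finally show ?thesis .
  next
    case True
    define a where "a = multiplicity B n"
    obtain m where n_eq: "n = B ^ a * m" and "\<not> B dvd m"
      unfolding a_def using Suc.prems True by (metis multiplicity_decompose' not_prime_unit neq0_conv)
    have m: "m > 0" using Suc.prems(1) n_eq by (cases m) auto
    have B2: "B \<ge> 2" using True prime_ge_2_nat by blast
    have IH: "real (divisor_count m) \<le> K ^ min B M * real m powr \<epsilon>"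
    proof (rule Suc.IH[OF m])
      fix p assume "prime p" "p dvd m"
      hence "p dvd n" "p \<noteq> B" using n_eq \<open>\<not> B dvd m\<close> by auto
      thus "p < B" using Suc.prems(2)[OF \<open>prime p\<close>] by (simp add: less_Suc_eq)
    qed
    have "divisor_count n \<le> divisor_count (B ^ a) * divisor_count m"
      unfolding n_eq using B2 m by (intro divisor_count_mult_le) auto
    also have "\<dots> \<le> (a + 1) * divisor_count m"
      using divisor_count_prime_power_le[OF True] by (intro mult_right_mono) auto
    finally have "real (divisor_count n) \<le> real (a + 1) * real (divisor_count m)"
      by (metis of_nat_le_iff of_nat_mult)
    also have "\<dots> \<le> real (a + 1) * K ^ min B M * real m powr \<epsilon>"
      using IH by (simp add: mult.assoc mult_left_mono)
    also have "\<dots> \<le> K ^ min (Suc B) M * real B powr (real a * \<epsilon>) * real m powr \<epsilon>"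
      using prime_power_factor_bound[OF eps B2, of a] by (intro mult_right_mono) (auto simp: K_def M_def)
    also have "\<dots> = K ^ min (Suc B) M * real n powr \<epsilon>"
      using B2 m by (simp add: n_eq powr_mult powr_powr powr_realpow[symmetric] mult_ac)
    finally show ?thesis .
  qed
qed

lemma divisor_count_bound:
  fixes \<epsilon> :: real
  assumes "\<epsilon> > 0"
  obtains C where "\<And>n. n > 0 \<Longrightarrow> real (divisor_count n) \<le> C * real n powr \<epsilon>"
proof
  define K where "K = 1 + 1 / (\<epsilon> * ln 2)"
  define M where "M = nat \<lceil>2 powr (1 / \<epsilon>)\<rceil>"
  fix n :: nat assume n: "n > 0"
  have "\<And>p. p dvd n \<Longrightarrow> p < Suc n" using n by (auto dest: dvd_imp_le)
  hence "real (divisor_count n) \<le> K ^ min (Suc n) M * real n powr \<epsilon>"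
    unfolding K_def M_def using assms n by (intro divisor_count_smooth_bound) auto
  also have "\<dots> \<le> K ^ M * real n powr \<epsilon>"
    using assms by (intro mult_right_mono power_increasing) (auto simp: K_def)
  finally show "real (divisor_count n) \<le> K ^ M * real n powr \<epsilon>" .
qed

section \<open>Counting d-tuples with prescribed product\<close>

lemma tuples_prod_finite:
  assumes "j > 0"
  shows "finite (tuples_prod d j)"
proof -
  have "tuples_prod d j \<subseteq> {xs. set xs \<subseteq> {..j} \<and> length xs = d}"
    using assms by (auto simp: tuples_prod_def dest!: prod_list_dvd intro: dvd_imp_le)
  thus ?thesis by (rule finite_subset) (rule finite_lists_length_eq, simp)
qed

(* (j, 1, ..., 1) is such a tuple, so d(j) \<ge> 1. *)
lemma dfun_pos:
  assumes "j > 0" "d \<ge> 1"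
  shows "dfun d j \<ge> 1"
proof -
  have "j # replicate (d - 1) 1 \<in> tuples_prod d j" using assms by (auto simp: tuples_prod_def)
  thus ?thesis unfolding dfun_def using tuples_prod_finite[OF assms(1)]
    by (auto simp: Suc_le_eq card_gt_0_iff)
qed

(* A tuple with product j is determined by its first d-1 entries, which are divisors of j. *)
lemma dfun_le_divisor_count_power:
  assumes "j > 0" "d \<ge> 1"
  shows "dfun d j \<le> divisor_count j ^ (d - 1)"
proof -
  let ?L = "{xs. set xs \<subseteq> {k. k dvd j} \<and> length xs = d - 1}"
  have prod_split: "prod_list (butlast xs) * last xs = j" if "xs \<in> tuples_prod d j" for xs
  proof -
    have "xs \<noteq> []" using that assms by (auto simp: tuples_prod_def)
    hence "prod_list (butlast xs @ [last xs]) = j" using that by (simp add: tuples_prod_def)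
    thus ?thesis by simp
  qed
  have "inj_on butlast (tuples_prod d j)"
  proof
    fix xs ys assume xs: "xs \<in> tuples_prod d j" and ys: "ys \<in> tuples_prod d j"
      and eq: "butlast xs = butlast ys"
    have "prod_list (butlast xs) \<noteq> 0" using prod_split[OF xs] assms by auto
    hence "last xs = last ys" using prod_split[OF xs] prod_split[OF ys] eq by (metis mult_left_cancel)
    moreover have "xs \<noteq> []" "ys \<noteq> []" using xs ys assms by (auto simp: tuples_prod_def)
    ultimately show "xs = ys" using eq by (metis append_butlast_last_id)
  qed
  moreover have "butlast ` tuples_prod d j \<subseteq> ?L"
    by (auto simp: tuples_prod_def intro!: prod_list_dvd dest!: in_set_butlastD)
  moreover have fin: "finite {k. k dvd j}" using assms by (intro finite_divisors_nat) auto
  ultimately have "card (tuples_prod d j) \<le> card ?L"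
    by (intro card_inj_on_le finite_lists_length_eq)
  thus ?thesis using fin by (simp add: dfun_def card_lists_length_eq divisor_count_def)
qed

lemma dfun_bound:
  fixes \<epsilon> :: real
  assumes "\<epsilon> > 0" "d \<ge> 1"
  obtains C where "C \<ge> 0" "\<And>j. j > 0 \<Longrightarrow> real (dfun d j) \<le> C * real j powr \<epsilon>"
proof -
  obtain C where C: "\<And>n. n > 0 \<Longrightarrow> real (divisor_count n) \<le> C * real n powr (\<epsilon> / real d)"
    using divisor_count_bound[of "\<epsilon> / real d"] assms by auto
  have C0: "C \<ge> 0" using C[of 1] by (simp add: divisor_count_def)
  have "real (dfun d j) \<le> C ^ (d - 1) * real j powr \<epsilon>" if j: "j > 0" for j
  proof -
    have "real (dfun d j) \<le> real (divisor_count j) ^ (d - 1)"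
      using dfun_le_divisor_count_power[OF j assms(2)] by (metis of_nat_le_iff of_nat_power)
    also have "\<dots> \<le> (C * real j powr (\<epsilon> / real d)) ^ (d - 1)"
      using C[OF j] by (intro power_mono) auto
    also have "\<dots> = C ^ (d - 1) * real j powr (real (d - 1) * (\<epsilon> / real d))"
      using j by (simp add: power_mult_distrib powr_power)
    also have "\<dots> \<le> C ^ (d - 1) * real j powr \<epsilon>"
      using j assms C0 by (intro mult_left_mono powr_mono) (auto simp: field_simps)
    finally show ?thesis .
  qed
  thus ?thesis using C0 that[of "C ^ (d - 1)"] by auto
qed

(* Each term of the inner sum equals 1/j^\<theta>, so the inner sum is d(j)/j^\<theta>. *)
lemma sum_tuples_prod_powr:
  "(\<Sum>n\<in>tuples_prod d j. 1 / real (prod_list n) powr \<theta>) = real (dfun d j) / real j powr \<theta>"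
proof -
  have "(\<Sum>n\<in>tuples_prod d j. 1 / real (prod_list n) powr \<theta>)
        = (\<Sum>n\<in>tuples_prod d j. 1 / real j powr \<theta>)"
    by (rule sum.cong) (auto simp: tuples_prod_def)
  thus ?thesis by (simp add: dfun_def)
qed

lemma summable_dfun_powr:
  fixes M :: "nat \<Rightarrow> nat" and s \<theta> :: real
  assumes "summable (\<lambda>i. real (M i) powr (-s))" "s < \<theta>" "d \<ge> 1"
  shows "summable (\<lambda>i. real (dfun d (M i)) / real (M i) powr \<theta>)"
proof -
  obtain C where C0: "C \<ge> 0" and C: "\<And>j. j > 0 \<Longrightarrow> real (dfun d j) \<le> C * real j powr (\<theta> - s)"
    using dfun_bound[of "\<theta> - s" d] assms by auto
  have bound: "norm (real (dfun d j) / real j powr \<theta>) \<le> C * real j powr (-s)" for j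
  proof (cases "j = 0")
    case False
    hence "real (dfun d j) / real j powr \<theta> \<le> C * real j powr (\<theta> - s) / real j powr \<theta>"
      using C by (intro divide_right_mono) auto
    also have "\<dots> = C * real j powr (-s)" by (simp add: powr_diff powr_minus_divide)
    finally show ?thesis by simp
  qed simp
  show ?thesis
    by (rule summable_comparison_test'[OF summable_mult[OF assms(1), of C] bound])
qed

lemma not_summable_dfun_powr:
  fixes M :: "nat \<Rightarrow> nat" and \<theta> :: real
  assumes "\<not> summable (\<lambda>i. real (M i) powr (-\<theta>))" "d \<ge> 1"
  shows "\<not> summable (\<lambda>i. real (dfun d (M i)) / real (M i) powr \<theta>)"
proof
  assume sum: "summable (\<lambda>i. real (dfun d (M i)) / real (M i) powr \<theta>)"
  have bound: "norm (real j powr (-\<theta>)) \<le> real (dfun d j) / real j powr \<theta>" for j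
  proof (cases "j = 0")
    case False
    have "real (dfun d j) \<ge> 1" using dfun_pos[of j d] False assms(2) by simp
    hence "1 / real j powr \<theta> \<le> real (dfun d j) / real j powr \<theta>"
      by (intro divide_right_mono) auto
    thus ?thesis by (simp add: powr_minus_divide)
  qed simp
  have "summable (\<lambda>i. real (M i) powr (-\<theta>))"
    by (rule summable_comparison_test'[OF sum bound])
  with assms(1) show False by contradiction
qed

section \<open>Growth of the sequence N_i\<close>

lemma Nseq_floor_bounds:
  fixes \<kappa> \<eta> :: real and i :: nat
  shows
  "real (Nseq \<kappa> \<eta> i) \<le> real i powr \<kappa> * ln (real i) powr \<eta>"
  "real i powr \<kappa> * ln (real i) powr \<eta> < real (Nseq \<kappa> \<eta> i) + 1"
proof -
  have "0 \<le> real i powr \<kappa> * ln (real i) powr \<eta>" by simp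
  hence "real (Nseq \<kappa> \<eta> i) = of_int \<lfloor>real i powr \<kappa> * ln (real i) powr \<eta>\<rfloor>"
    unfolding Nseq_def by simp
  thus "real (Nseq \<kappa> \<eta> i) \<le> real i powr \<kappa> * ln (real i) powr \<eta>"
    "real i powr \<kappa> * ln (real i) powr \<eta> < real (Nseq \<kappa> \<eta> i) + 1" by linarith+
qed

(* Since i^\<kappa> (log i)^\<eta> \<rightarrow> \<infinity>, eventually it is \<ge> 2, so its floor is at least half of it. *)
lemma Nseq_eventually_ge_half:
  fixes \<kappa> \<eta> :: real
  assumes "\<kappa> > 0"
  shows "eventually (\<lambda>i. 1 \<le> (real i powr \<kappa> * ln (real i) powr \<eta>) / 2
                         \<and> (real i powr \<kappa> * ln (real i) powr \<eta>) / 2 \<le> real (Nseq \<kappa> \<eta> i)) at_top"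
proof -
  have "eventually (\<lambda>i::nat. 2 \<le> real i powr \<kappa> * ln (real i) powr \<eta>) at_top"
    using assms by real_asymp
  thus ?thesis
  proof eventually_elim
    case (elim i)
    thus ?case using Nseq_floor_bounds(2)[where \<kappa> = \<kappa> and \<eta> = \<eta> and i = i] by linarith
  qed
qed

(* \<Sum> N_i^(-s) converges when \<kappa> s > 1: eventually N_i^(-s) \<le> i^(-(\<kappa> s + 1)/2). *)
lemma summable_Nseq_powr:
  fixes \<kappa> \<eta> s :: real
  assumes "\<kappa> > 0" "\<kappa> * s > 1"
  shows "summable (\<lambda>i. real (Nseq \<kappa> \<eta> i) powr (-s))"
proof -
  have s: "s > 0" using zero_less_mult_pos[of \<kappa> s] assms by linarith
  have "eventually (\<lambda>i::nat. ((real i powr \<kappa> * ln (real i) powr \<eta>) / 2) powr (-s)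
                              \<le> real i powr (-((\<kappa> * s + 1) / 2))) at_top"
    using assms s by real_asymp
  hence "eventually (\<lambda>i. norm (real (Nseq \<kappa> \<eta> i) powr (-s)) \<le> real i powr (-((\<kappa> * s + 1) / 2))) at_top"
    using Nseq_eventually_ge_half[OF assms(1), of \<eta>]
  proof eventually_elim
    case (elim i)
    hence "real (Nseq \<kappa> \<eta> i) powr (-s) \<le> ((real i powr \<kappa> * ln (real i) powr \<eta>) / 2) powr (-s)"
      using s by (intro powr_mono2') auto
    thus ?case using elim(1) by simp
  qed
  moreover have "summable (\<lambda>i. real i powr (-((\<kappa> * s + 1) / 2)))"
    using assms by (simp add: summable_real_powr_iff)
  ultimately show ?thesis by (rule summable_comparison_test_ev)
qed

(* \<Sum> N_i^(-s) diverges when 0 < \<kappa> s < 1, since then N_i^s \<le> i eventually. *)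
lemma not_summable_Nseq_powr:
  fixes \<kappa> \<eta> s :: real
  assumes "\<kappa> > 0" "s > 0" "\<kappa> * s < 1"
  shows "\<not> summable (\<lambda>i. real (Nseq \<kappa> \<eta> i) powr (-s))"
proof
  assume sum: "summable (\<lambda>i. real (Nseq \<kappa> \<eta> i) powr (-s))"
  have "eventually (\<lambda>i::nat. real i powr (-1) \<le> (real i powr \<kappa> * ln (real i) powr \<eta>) powr (-s)) at_top"
    using assms by real_asymp
  hence "eventually (\<lambda>i. norm (real i powr (-1)) \<le> real (Nseq \<kappa> \<eta> i) powr (-s)) at_top"
    using Nseq_eventually_ge_half[OF assms(1), of \<eta>]
  proof eventually_elim
    case (elim i)
    hence "real (Nseq \<kappa> \<eta> i) \<ge> 1" by linarith
    hence "(real i powr \<kappa> * ln (real i) powr \<eta>) powr (-s) \<le> real (Nseq \<kappa> \<eta> i) powr (-s)"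
      using assms(2) Nseq_floor_bounds(1) by (intro powr_mono2') auto
    thus ?case using elim by simp
  qed
  hence "summable (\<lambda>i. real i powr (-1))" using sum by (rule summable_comparison_test_ev)
  thus False using summable_real_powr_iff[of "-1"] by simp
qed

theorem lemma3p3:
  fixes d :: nat and \<kappa> \<theta> \<eta> :: real
  assumes "d \<ge> 1" and "\<kappa> \<ge> 1" and "\<theta> > 0"
  defines "N \<equiv> Nseq \<kappa> \<eta>"
  defines "f \<equiv> (\<lambda>i::nat. if i \<ge> 2 \<and> N i \<noteq> 0
                then (\<Sum>n\<in>tuples_prod d (N i). 1 / real (prod_list n) powr \<theta>) else 0)"
  shows "(\<forall>i. f i = (if i \<ge> 2 \<and> N i \<noteq> 0
                      then real (dfun d (N i)) / real (N i) powr \<theta> else 0))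
         \<and> (\<theta> > 1 / \<kappa> \<longrightarrow> summable f)
         \<and> (\<theta> < 1 / \<kappa> \<longrightarrow> \<not> summable f)"
proof -
  define h where "h i = real (dfun d (N i)) / real (N i) powr \<theta>" for i
  have f_eq: "f i = (if i \<ge> 2 \<and> N i \<noteq> 0 then h i else 0)" for i
    by (simp add: f_def h_def sum_tuples_prod_powr)
  (* the terms with N i = 0 vanish anyway, so f agrees with h from i = 2 on *)
  have "eventually (\<lambda>i. f i = h i) at_top"
    using eventually_ge_at_top[of 2] by eventually_elim (simp add: f_eq h_def)
  hence summable_f: "summable f \<longleftrightarrow> summable h" by (rule summable_cong)
  have "summable h" if "\<theta> > 1 / \<kappa>"
  proof -
    have "\<kappa> * ((\<theta> + 1 / \<kappa>) / 2) > 1" using that assms(2) by (simp add: field_simps)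
    thus ?thesis unfolding h_def N_def using that assms(1,2)
      by (intro summable_dfun_powr[of _ "(\<theta> + 1 / \<kappa>) / 2"] summable_Nseq_powr) auto
  qed
  moreover have "\<not> summable h" if "\<theta> < 1 / \<kappa>"
  proof -
    have "\<kappa> * \<theta> < 1" using that assms(2) by (simp add: field_simps)
    thus ?thesis unfolding h_def N_def using assms(1,2,3)
      by (intro not_summable_dfun_powr not_summable_Nseq_powr) auto
  qed
  ultimately show ?thesis using f_eq summable_f by (simp add: h_def)
qed

end
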